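(* Consider a ROS~2 application executed on a single processor by the events executor with the two-queue mechanism described in the context, under the standing assumptions of the context (including LIFO-ordered delivery of messages by the communication middleware and LIFO tie-breaking among equal priorities). At every scheduling decision, the scheduling logic schedules a highest-priority released subtask.
   Context: Model: a ROS~2 application is abstracted (by unfolding: each subscription callback with several parents is virtually duplicated so each copy has one parent) as a forest of trees of subtasks (callbacks). Roots (timers or externally triggered subscriptions) are released periodically or sporadically, and each root job has a known integer priority, which may vary between jobs (e.g., deadlines for EDF). A child subtask is released immediately when its parent completes (and only then), and inherits its parent's priority (fixed job-level priority). Callbacks spawn no threads, do not block on I/O and have bounded execution time; execution is non-preemptive on a single processor, so preemption can only occur between subtasks. Larger priority values mean higher priority. Executor mechanism: a released root subtask is pushed into a priority queue (root_queue) ordered by priority; a released child subtask is assigned the value latest_priority and pushed onto a LIFO queue (child_queue); at each scheduling decision the top elements of the two queues are compared, the one of greater priority is popped and executed, and latest_priority is set to its priority. Messages consumed by subscriptions are delivered by the middleware in LIFO order. *)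

theory Defs
  imports Main "HOL-Library.Multiset"
begin

text \<open>Subtasks (callbacks, after unfolding) are elements of a type 't; T is the
finite set of subtasks of the application, R the roots (timers or externally
triggered subscriptions) and ch t the list of children of subtask t.\<close>

definition forest :: "'t set \<Rightarrow> 't set \<Rightarrow> ('t \<Rightarrow> 't list) \<Rightarrow> bool" where
  "forest T R ch \<longleftrightarrow>
     finite T \<and> R \<subseteq> T \<and>
     (\<forall>t\<in>T. set (ch t) \<subseteq> T \<and> distinct (ch t)) \<and>
     (\<forall>t\<in>T. \<forall>u\<in>T. \<forall>c. c \<in> set (ch t) \<and> c \<in> set (ch u) \<longrightarrow> t = u) \<and>
     (\<forall>t\<in>T. \<forall>c\<in>set (ch t). c \<notin> R) \<and>
     (\<forall>t\<in>T. t \<notin> R \<longrightarrow> (\<exists>u\<in>T. t \<in> set (ch u))) \<and>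
     wf {(c, t). t \<in> T \<and> c \<in> set (ch t)}"

text \<open>A job (released instance of a subtask) records its subtask, its true
(fixed job-level) priority, the key under which the executor stores it
(the root priority for roots, the value of latest_priority for children),
and a release stamp (release order, used for LIFO tie-breaking).
Larger priority values mean higher priority.\<close>

datatype 't job = Job (jtask: 't) (jprio: int) (jkey: int) (jstamp: nat)

record 't exstate =
  root_queue :: "'t job list"      \<comment> \<open>priority queue (stored as a bag)\<close>
  child_queue :: "'t job list"     \<comment> \<open>LIFO stack, head = top\<close>
  latest_priority :: int
  running :: "'t job option"       \<comment> \<open>job currently executing (non-preemptive)\<close>
  clock :: nat

definition better :: "'t job \<Rightarrow> 't job \<Rightarrow> bool" where
  "better a b \<longleftrightarrow> jkey a > jkey b \<or> (jkey a = jkey b \<and> jstamp a > jstamp b)"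

fun pq_top :: "'t job list \<Rightarrow> 't job option" where
  "pq_top [] = None"
| "pq_top (x # xs) = (case pq_top xs of None \<Rightarrow> Some x
                        | Some y \<Rightarrow> if better y x then Some y else Some x)"

definition dispatch :: "('t, 'e) exstate_scheme \<Rightarrow> ('t job \<times> ('t, 'e) exstate_scheme) option" where
  "dispatch s =
     (case (pq_top (root_queue s), child_queue s) of
        (None, []) \<Rightarrow> None
      | (Some r, []) \<Rightarrow> Some (r, s\<lparr>root_queue := remove1 r (root_queue s)\<rparr>)
      | (None, c # cs) \<Rightarrow> Some (c, s\<lparr>child_queue := cs\<rparr>)
      | (Some r, c # cs) \<Rightarrow>
          if better c r then Some (c, s\<lparr>child_queue := cs\<rparr>)
          else Some (r, s\<lparr>root_queue := remove1 r (root_queue s)\<rparr>))"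

text \<open>Released (pending) subtasks: everything in the two queues.\<close>
definition pending :: "('t, 'e) exstate_scheme \<Rightarrow> 't job set" where
  "pending s = set (root_queue s) \<union> set (child_queue s)"

definition child_jobs :: "'t job \<Rightarrow> int \<Rightarrow> nat \<Rightarrow> 't list \<Rightarrow> 't job list" where
  "child_jobs j lp k cs = map (\<lambda>(c, i). Job c (jprio j) lp i) (zip cs [k..<k + length cs])"

inductive reachable :: "'t set \<Rightarrow> ('t \<Rightarrow> 't list) \<Rightarrow> 't exstate \<Rightarrow> bool"
  for R :: "'t set" and ch :: "'t \<Rightarrow> 't list" where
  init: "reachable R ch \<lparr>root_queue = [], child_queue = [], latest_priority = (l0::int),
                          running = None, clock = 0\<rparr>"
\<comment> \<open>release of a root job with an arbitrary priority p, at any time\<close>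
| release: "reachable R ch s \<Longrightarrow> t \<in> R \<Longrightarrow>
     reachable R ch (s\<lparr>root_queue := Job t (p::int) p (clock s) # root_queue s,
                       clock := Suc (clock s)\<rparr>)"
| schedule: "reachable R ch s \<Longrightarrow> running s = None \<Longrightarrow> dispatch s = Some (j, s') \<Longrightarrow>
     reachable R ch (s'\<lparr>latest_priority := jkey j, running := Some j\<rparr>)"
\<comment> \<open>completion of the running job: its children are released and pushed
   (in any order) onto the child queue with key latest_priority\<close>
| complete: "reachable R ch s \<Longrightarrow> running s = Some j \<Longrightarrow> mset cs = mset (ch (jtask j)) \<Longrightarrow>
     reachable R ch (s\<lparr>child_queue := rev (child_jobs j (latest_priority s) (clock s) cs)
                                       @ child_queue s,
                       running := None,
                       clock := clock s + length cs\<rparr>)"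

end

theory Submission
  imports Defs
begin

text \<open>Two invariants of the executor make its choice correct. First, every queued
job is stored under its true priority: a root is stored under its own priority, and
a child is pushed at the completion of its parent, when latest_priority still holds
the key of that parent, i.e.\ the priority the child inherits. Second, the child
queue is non-increasing in key from top to bottom: the children just pushed carry the
key of the job that just completed, and that job was scheduled with a key at least
as large as every key then in the child queue. So the top of the child queue has the
greatest key in it, the top of the priority queue the greatest key among the roots,
and the larger of the two is a highest-priority released job.\<close>

lemma pq_top_eq_None_iff: "pq_top xs = None \<longleftrightarrow> xs = []"
  by (induction xs) (auto split: option.splits)

lemma pq_top_max_key:
  assumes "pq_top xs = Some r"
  shows "r \<in> set xs" and "\<forall>x\<in>set xs. jkey x \<le> jkey r"
  using assms
proof (induction xs arbitrary: r)
  case (Cons a xs)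
  { case 1 with Cons.IH(1) show ?case by (auto split: option.splits if_splits) }
  { case 2 with Cons.IH(2) show ?case
      by (auto simp: better_def pq_top_eq_None_iff split: option.splits if_splits) }
qed simp_all

lemma dispatch_eq_None_iff: "dispatch s = None \<longleftrightarrow> pending s = {}"
  by (auto simp: dispatch_def pending_def pq_top_eq_None_iff
           split: option.splits list.splits if_splits)

lemma dispatch_SomeE:
  assumes "dispatch s = Some (j, s')"
  obtains (root) "pq_top (root_queue s) = Some j"
      "\<forall>c cs. child_queue s = c # cs \<longrightarrow> jkey c \<le> jkey j"
      "s' = s\<lparr>root_queue := remove1 j (root_queue s)\<rparr>"
  | (child) cs where "child_queue s = j # cs"
      "\<forall>r. pq_top (root_queue s) = Some r \<longrightarrow> jkey r \<le> jkey j"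
      "s' = s\<lparr>child_queue := cs\<rparr>"
  using assms
  by (cases "pq_top (root_queue s)"; cases "child_queue s")
     (auto simp: dispatch_def better_def split: if_splits)

lemma dispatch_pending:
  assumes "dispatch s = Some (j, s')"
  shows "j \<in> pending s" and "pending s' \<subseteq> pending s"
proof -
  show "j \<in> pending s"
    using assms
    by (cases rule: dispatch_SomeE) (auto simp: pending_def dest: pq_top_max_key(1))
  show "pending s' \<subseteq> pending s"
    using assms
    by (cases rule: dispatch_SomeE) (auto simp: pending_def dest: set_remove1_subset[THEN subsetD])
qed

lemma dispatch_max_key:
  assumes "sorted_wrt (\<ge>) (map jkey (child_queue s))" and "dispatch s = Some (j, s')"
    and "x \<in> pending s"
  shows "jkey x \<le> jkey j"
  using assms(2)
proof (cases rule: dispatch_SomeE)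
  case root
  have "jkey c \<le> jkey j" if "c \<in> set (child_queue s)" for c
  proof -
    from that obtain c0 cs where "child_queue s = c0 # cs"
      by (cases "child_queue s") auto
    with assms(1) root(2) that show ?thesis by (auto simp: sorted_wrt_map)
  qed
  with root(1) assms(3) show ?thesis by (auto simp: pending_def dest: pq_top_max_key(2))
next
  case child
  with assms(1) have "\<forall>c\<in>set (child_queue s). jkey c \<le> jkey j" by (auto simp: sorted_wrt_map)
  moreover have "jkey r \<le> jkey j" if "r \<in> set (root_queue s)" for r
    using that child(2)
    by (cases "pq_top (root_queue s)") (fastforce simp: pq_top_eq_None_iff dest: pq_top_max_key(2))+
  ultimately show ?thesis using assms(3) by (auto simp: pending_def)
qed

lemma dispatch_child_queue_suffix:
  assumes "dispatch s = Some (j, s')"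
  shows "\<exists>zs. child_queue s = zs @ child_queue s'"
  using assms by (cases rule: dispatch_SomeE) auto

lemma dispatch_running_latest_priority:
  assumes "dispatch s = Some (j, s')"
  shows "running s' = running s \<and> latest_priority s' = latest_priority s"
  using assms by (cases rule: dispatch_SomeE) simp_all

lemma child_jobs_key_prio:
  assumes "x \<in> set (child_jobs j lp k cs)"
  shows "jkey x = lp" and "jprio x = jprio j"
  using assms by (auto simp: child_jobs_def set_zip)

definition executor_inv :: "'t exstate \<Rightarrow> bool" where
  "executor_inv s \<longleftrightarrow>
     (\<forall>x\<in>pending s. jkey x = jprio x) \<and>
     sorted_wrt (\<ge>) (map jkey (child_queue s)) \<and>
     (\<forall>j. running s = Some j \<longrightarrow> jkey j = jprio j \<and> latest_priority s = jkey j \<and>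
          (\<forall>c\<in>set (child_queue s). jkey c \<le> jkey j))"

lemma executor_inv_schedule:
  assumes "executor_inv s" and "dispatch s = Some (j, s')"
  shows "executor_inv (s'\<lparr>latest_priority := jkey j, running := Some j\<rparr>)"
proof -
  have sorted: "sorted_wrt (\<ge>) (map jkey (child_queue s))"
    using assms(1) by (simp add: executor_inv_def)
  obtain zs where zs: "child_queue s = zs @ child_queue s'"
    using dispatch_child_queue_suffix[OF assms(2)] by blast
  have "sorted_wrt (\<ge>) (map jkey (child_queue s'))"
    using sorted by (simp add: zs sorted_wrt_append)
  moreover have "\<forall>c\<in>set (child_queue s'). jkey c \<le> jkey j"
    using dispatch_max_key[OF sorted assms(2)] by (auto simp: pending_def zs)
  moreover have "\<forall>x\<in>pending s'. jkey x = jprio x" and "jkey j = jprio j"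
    using assms(1) dispatch_pending[OF assms(2)] by (auto simp: executor_inv_def)
  ultimately show ?thesis by (simp add: executor_inv_def pending_def)
qed

lemma executor_inv_complete:
  assumes "executor_inv s" and "running s = Some j"
  shows "executor_inv (s\<lparr>child_queue := rev (child_jobs j (latest_priority s) (clock s) cs)
                                         @ child_queue s,
                        running := None, clock := clock s + length cs\<rparr>)"
proof -
  let ?new = "rev (child_jobs j (latest_priority s) (clock s) cs)"
  have new: "jkey x = jkey j \<and> jprio x = jkey j"
    if "x \<in> set (child_jobs j (latest_priority s) (clock s) cs)" for x
    using assms that child_jobs_key_prio[of x] by (auto simp: executor_inv_def)
  have "sorted_wrt (\<ge>) (map jkey ?new)"
    by (rule sorted_wrt_mono_rel[OF _ sorted_wrt_true]) (auto simp: new)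
  then have "sorted_wrt (\<ge>) (map jkey (?new @ child_queue s))"
    using assms new by (auto simp: executor_inv_def sorted_wrt_append)
  with assms new show ?thesis by (auto simp: executor_inv_def pending_def)
qed

lemma reachable_executor_inv: "reachable R ch s \<Longrightarrow> executor_inv s"
proof (induction rule: reachable.induct)
  case init
  then show ?case by (simp add: executor_inv_def pending_def)
next
  case release
  then show ?case by (auto simp: executor_inv_def pending_def)
next
  case schedule
  then show ?case using executor_inv_schedule dispatch_running_latest_priority by metis
next
  case complete
  then show ?case using executor_inv_complete by blast
qed

theorem theorem1:
  fixes T R :: "'t set" and ch :: "'t \<Rightarrow> 't list" and s :: "'t exstate"
  assumes "forest T R ch"
    and "reachable R ch s"
    and "running s = None"
    and "pending s \<noteq> {}"
  shows "\<exists>j s'. dispatch s = Some (j, s') \<and> j \<in> pending s \<and>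
                (\<forall>j' \<in> pending s. jprio j' \<le> jprio j)"
proof -
  have inv: "executor_inv s" using reachable_executor_inv[OF assms(2)] .
  obtain j s' where dispatch: "dispatch s = Some (j, s')"
    using assms(4) dispatch_eq_None_iff by (metis not_None_eq surj_pair)
  have j: "j \<in> pending s" using dispatch_pending(1)[OF dispatch] .
  have "jprio x \<le> jprio j" if "x \<in> pending s" for x
    using inv dispatch_max_key[OF _ dispatch that] j that by (auto simp: executor_inv_def)
  with dispatch j show ?thesis by blast
qed

end
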